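(* With notation as in the context, suppose the edge localization graph $\bar{\mathcal{G}}$ has an oriented spanning tree with root $r$, and $r$ knows the bearing vector $\mathbf{g}_{v_1 r}$ to one of its neighbors $v_1$ in $\bar{\mathcal{G}}$. Let $l$ be the edge agent corresponding to the edge $(r,v_1)\in\bar{\mathcal{E}}$, and run the estimation dynamics $\dot{\hat z}_k(t)=\sum_{j\in\mathcal{N}_k}\bigl(e^{-\mathrm{i}\theta_{jk}}\hat z_j(t)-\hat z_k(t)\bigr)$ for all $k\neq l$, while the edge agent $l$ does not update, i.e. $\hat z_l(t)=z_l$ for all $t\ge t_0$ (the other initial estimates $\hat z_k(t_0)$ being arbitrary). Then the estimate $\hat{\mathbf{z}}(t)=[\hat z_1(t),\dots,\hat z_M(t)]^T$ converges exponentially to the true value $\mathbf{z}$.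
   Context: Setting. There are $N$ agents $\mathcal{V}=\{1,\dots,N\}$ at distinct positions $\mathbf{p}_u\in\mathbb{R}^2$. The bearing vector is $\mathbf{g}_{vu}=(\mathbf{p}_v-\mathbf{p}_u)/\|\mathbf{p}_v-\mathbf{p}_u\|$ and $\angle\mathbf{g}_{vu}\in[-\pi,\pi)$ its angle in a fixed global frame. For distinct agents $u,v,w$, $\alpha^{u}_{wv}\in[-\pi,\pi)$ denotes the counterclockwise angle at $u$ from $\mathbf{g}_{vu}$ to $\mathbf{g}_{wu}$. A set $\mathcal{S}$ of measured subtended angles is given, with $\alpha^{u}_{wv}\in\mathcal{S}$ iff $\alpha^{u}_{vw}\in\mathcal{S}$. Standing assumption: if an agent measures subtended angles between two or more pairs of other agents, all bearing vectors associated with these measurements are related to each other through them (so that the subtended angle at that agent between any two of these agents is determined by its measurements). The communication graph $\mathcal{G}=(\mathcal{V},\mathcal{E})$ has as edges exactly the ordered pairs $(u,v),(v,u),(u,w),(w,u)$ for all $\alpha^{u}_{wv}\in\mathcal{S}$; it is symmetric and assumed connected. Edge localization graph $\bar{\mathcal{G}}=(\bar{\mathcal{V}},\bar{\mathcal{E}})$: for each $(u,v)\in\mathcal{E}$ with no $w$ such that $\alpha^{v}_{wu}\in\mathcal{S}$, introduce a new virtual vertex $\bar v^{u}$ (distinct for distinct such pairs), co-located with agent $v$; $\bar{\mathcal{E}}$ is obtained from $\mathcal{E}$ by replacing each such pair $(u,v),(v,u)$ by $(u,\bar v^{u}),(\bar v^{u},u)$; $\bar{\mathcal{V}}$ consists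 of the agents that measure at least one subtended angle together with all virtual vertices. For $a\in\bar{\mathcal{V}}$ let $\rho(a)$ be the real agent it is (co-located with): $\rho(\bar v^u)=v$, $\rho(v)=v$; bearing vectors involving virtual vertices are those of the corresponding real agents. The directed line graph $L(\bar{\mathcal{G}})$ has vertex set $\bar{\mathcal{E}}$ and an edge $(e_1,e_2)$ whenever the head of $e_1$ equals the tail of $e_2$. The localization interaction graph $\mathcal{G}'=(\mathcal{V}',\mathcal{E}')$ is $L(\bar{\mathcal{G}})$ with vertices relabelled by a bijection onto $\mathcal{V}'=\{1,\dots,M\}$, $M=|\bar{\mathcal{E}}|$; vertex $k$ corresponding to $(a,b)\in\bar{\mathcal{E}}$ is the edge agent $k$; its neighbor set is $\mathcal{N}_k=\{j:(k,j)\in\mathcal{E}'\}$. For edge agent $k$ corresponding to $(a,b)$ set $\theta_k=\angle\mathbf{g}_{\rho(b)\rho(a)}$ and $z_k=e^{\mathrm{i}\theta_k}$, $\mathbf{z}=[z_1,\dots,z_M]^T$. For $j\in\mathcal{N}_k$ with $j$ corresponding to $(b,c)$, write $u=\rho(a)$, $v=\rho(b)$, $w=\rho(c)$ and set $\theta_{jk}=\mathrm{PV}(\alpha^{v}_{wu}+\pi)$ if $w\neq u$ and $\theta_{jk}=-\pi$ if $w=u$, where $\mathrm{PV}(\theta)=[(\theta+\pi)\bmod 2\pi]-\pi$. An oriented spanning tree of a directed graph with root $r$ is an acyclic subgraph containing all vertices in which every vertex other than $r$ has a directed path to $r$. *)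

theory Defs
  imports "HOL-Analysis.Analysis"
begin

text \<open>Agents are natural numbers in {1..N}; positions in R^2 are encoded as complex numbers.
  A measured subtended angle alpha^u_{wv} in S is encoded as the triple (u, w, v).
  Vertices of the edge localization graph: (v, None) is the real agent v,
  (v, Some u) is the virtual vertex vbar^u co-located with v.\<close>

type_synonym vtx = "nat \<times> nat option"

definition PV :: "real \<Rightarrow> real" where
  "PV \<theta> = \<theta> - 2 * pi * of_int \<lfloor>(\<theta> + pi) / (2 * pi)\<rfloor>"

definition ang :: "complex \<Rightarrow> real" where
  "ang g = PV (Arg g)"

definition bearing :: "(nat \<Rightarrow> complex) \<Rightarrow> nat \<Rightarrow> nat \<Rightarrow> complex" where
  "bearing p v u = (p v - p u) / of_real (cmod (p v - p u))"

text \<open>alpha p u w v = alpha^u_{wv}: ccw angle at u from g_{vu} to g_{wu}, in [-pi, pi).\<close>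
definition alpha :: "(nat \<Rightarrow> complex) \<Rightarrow> nat \<Rightarrow> nat \<Rightarrow> nat \<Rightarrow> real" where
  "alpha p u w v = PV (ang (bearing p w u) - ang (bearing p v u))"

definition comm_edges :: "(nat \<times> nat \<times> nat) set \<Rightarrow> (nat \<times> nat) set" where
  "comm_edges S = {e. \<exists>u w v. (u, w, v) \<in> S \<and> e \<in> {(u, v), (v, u), (u, w), (w, u)}}"

definition measures :: "(nat \<times> nat \<times> nat) set \<Rightarrow> nat \<Rightarrow> nat \<Rightarrow> bool" where
  "measures S v u \<longleftrightarrow> (\<exists>w. (v, w, u) \<in> S)"

definition elg_edges :: "(nat \<times> nat \<times> nat) set \<Rightarrow> (vtx \<times> vtx) set" where
  "elg_edges S =
     {((u, None), (v, None)) | u v. (u, v) \<in> comm_edges S \<and> measures S v u \<and> measures S u v}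
   \<union> {((u, None), (v, Some u)) | u v. (u, v) \<in> comm_edges S \<and> \<not> measures S v u}
   \<union> {((v, Some u), (u, None)) | u v. (u, v) \<in> comm_edges S \<and> \<not> measures S v u}"

definition elg_vertices :: "(nat \<times> nat \<times> nat) set \<Rightarrow> vtx set" where
  "elg_vertices S =
     {(v, None) | v. \<exists>w x. (v, w, x) \<in> S}
   \<union> {(v, Some u) | u v. (u, v) \<in> comm_edges S \<and> \<not> measures S v u}"

definition rho :: "vtx \<Rightarrow> nat" where
  "rho a = fst a"

definition has_oriented_spanning_tree :: "'v set \<Rightarrow> ('v \<times> 'v) set \<Rightarrow> 'v \<Rightarrow> bool" where
  "has_oriented_spanning_tree Vs Es r \<longleftrightarrow>
     r \<in> Vs \<and> (\<exists>T. T \<subseteq> Es \<and> acyclic T \<and> (\<forall>v\<in>Vs. v \<noteq> r \<longrightarrow> (v, r) \<in> T\<^sup>+))"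

text \<open>Neighbour set N_k in the localization interaction graph (line graph of the edge
  localization graph, relabelled by lab : {1..M} -> edges).\<close>
definition li_nbrs :: "(nat \<Rightarrow> vtx \<times> vtx) \<Rightarrow> nat \<Rightarrow> nat \<Rightarrow> nat set" where
  "li_nbrs lab M k = {j \<in> {1..M}. snd (lab k) = fst (lab j)}"

definition theta_edge :: "(nat \<Rightarrow> complex) \<Rightarrow> (nat \<Rightarrow> vtx \<times> vtx) \<Rightarrow> nat \<Rightarrow> real" where
  "theta_edge p lab k = ang (bearing p (rho (snd (lab k))) (rho (fst (lab k))))"

definition zval :: "(nat \<Rightarrow> complex) \<Rightarrow> (nat \<Rightarrow> vtx \<times> vtx) \<Rightarrow> nat \<Rightarrow> complex" where
  "zval p lab k = exp (\<i> * of_real (theta_edge p lab k))"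

text \<open>theta_{jk} for j in N_k, k ~ (a,b), j ~ (b,c).\<close>
definition theta_rel :: "(nat \<Rightarrow> complex) \<Rightarrow> (nat \<Rightarrow> vtx \<times> vtx) \<Rightarrow> nat \<Rightarrow> nat \<Rightarrow> real" where
  "theta_rel p lab j k =
     (let u = rho (fst (lab k)); v = rho (snd (lab k)); w = rho (snd (lab j))
      in if w \<noteq> u then PV (alpha p v w u + pi) else - pi)"

end

theory Submission
  imports Defs
begin

(* With e_k = zhat_k - z_k, the consistency exp(-i theta_jk) z_j = z_k of the true bearings
   turns the estimator into the same linear system for the errors, with unit-modulus gains
   and anchored by e_l = 0. The spanning tree makes l reachable from every edge agent in the
   interaction graph, so with d(k) the hop distance from k to l and eps small, the weights
   w_k = 1 - eps^d(k) are strictly dominant, sum_{j in N_k} w_j < |N_k| w_k, because some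
   neighbour is one hop closer to l. Then |e_k(t)| < w_k R exp(-delta (t - t0)) for all k and t:
   at a first time where this bound is attained, the derivative of
   |e_k|^2 - (w_k R exp(-delta (t - t0)))^2 would have to be nonnegative, but dominance makes
   it negative. *)

lemma has_real_derivative_norm_power2:
  fixes f :: "real \<Rightarrow> 'a::real_inner"
  assumes "(f has_vector_derivative D) (at t within S)"
  shows "((\<lambda>s. (norm (f s))\<^sup>2) has_real_derivative 2 * inner (f t) D) (at t within S)"
proof -
  have f': "(f has_derivative (\<lambda>h. h *\<^sub>R D)) (at t within S)"
    using assms by (simp add: has_vector_derivative_def)
  have "((\<lambda>s. inner (f s) (f s)) has_derivative
      (\<lambda>h. inner (f t) (h *\<^sub>R D) + inner (h *\<^sub>R D) (f t))) (at t within S)"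
    by (rule has_derivative_inner[OF f' f'])
  moreover have "(\<lambda>h. inner (f t) (h *\<^sub>R D) + inner (h *\<^sub>R D) (f t)) = (*) (2 * inner (f t) D)"
    by (auto simp: inner_commute fun_eq_iff algebra_simps)
  ultimately show ?thesis
    by (simp add: has_field_derivative_def power2_norm_eq_inner)
qed

lemma has_real_derivative_nonneg_at_left_max:
  fixes f :: "real \<Rightarrow> real"
  assumes "(f has_real_derivative D) (at s within {t0..})" and "t0 < s"
    and "\<And>t. t0 \<le> t \<Longrightarrow> t < s \<Longrightarrow> f t \<le> f s"
  shows "0 \<le> D"
proof (rule ccontr)
  assume "\<not> 0 \<le> D"
  then obtain d where "0 < d" and dec: "\<And>h. 0 < h \<Longrightarrow> s - h \<in> {t0..} \<Longrightarrow> h < d \<Longrightarrow> f s < f (s - h)"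
    using has_real_derivative_neg_dec_left[OF assms(1)] by force
  define h where "h = min (d / 2) (s - t0)"
  have "0 < h" "h < d" "t0 \<le> s - h" "s - h < s"
    using \<open>0 < d\<close> \<open>t0 < s\<close> by (auto simp: h_def)
  then have "f s < f (s - h)" and "f (s - h) \<le> f s"
    using dec assms(3) by auto
  then show False by simp
qed

lemma first_crossing_time:
  fixes g :: "'i \<Rightarrow> real \<Rightarrow> real"
  assumes fin: "finite K" and cont: "\<And>k. k \<in> K \<Longrightarrow> continuous_on {t0..} (g k)"
    and init: "\<And>k. k \<in> K \<Longrightarrow> g k t0 < 0"
    and crossing: "t0 \<le> t" "k \<in> K" "0 \<le> g k t"
  obtains s k where "t0 < s" "k \<in> K" "g k s = 0"
    "\<And>j. j \<in> K \<Longrightarrow> g j s \<le> 0"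
    "\<And>j \<tau>. j \<in> K \<Longrightarrow> t0 \<le> \<tau> \<Longrightarrow> \<tau> < s \<Longrightarrow> g j \<tau> < 0"
proof -
  define B where "B = (\<Union>k\<in>K. {t0..} \<inter> g k -` {0..})"
  have "closed B"
    unfolding B_def using fin by (intro closed_UN ballI continuous_closed_preimage cont) auto
  moreover have "bdd_below B" and "t \<in> B"
    unfolding B_def using crossing by (auto intro: bdd_belowI[of _ t0])
  ultimately have "Inf B \<in> B"
    using closed_contains_Inf by blast
  then obtain k where k: "k \<in> K" "t0 \<le> Inf B" "0 \<le> g k (Inf B)"
    unfolding B_def by auto
  have before: "g j \<tau> < 0" if "j \<in> K" "t0 \<le> \<tau>" "\<tau> < Inf B" for j \<tau>
  proof (rule ccontr)
    assume "\<not> g j \<tau> < 0"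
    then have "\<tau> \<in> B" unfolding B_def using that by (auto simp: not_less)
    then show False using cInf_lower[OF _ \<open>bdd_below B\<close>] that(3) by fastforce
  qed
  have "t0 < Inf B"
    using k init[of k] by (cases "t0 = Inf B") auto
  have at_crossing: "g j (Inf B) \<le> 0" if "j \<in> K" for j
  proof -
    have "{t0..<Inf B} \<subseteq> {t0..} \<inter> g j -` {..0}"
      using before[OF that] by (fastforce intro: less_imp_le)
    moreover have "closed ({t0..} \<inter> g j -` {..0})"
      by (intro continuous_closed_preimage cont[OF that]) auto
    ultimately have "closure {t0..<Inf B} \<subseteq> {t0..} \<inter> g j -` {..0}"
      by (rule closure_minimal)
    moreover have "Inf B \<in> closure {t0..<Inf B}"
      using \<open>t0 < Inf B\<close> by simp
    ultimately show ?thesis by blast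
  qed
  show ?thesis
    using that[OF \<open>t0 < Inf B\<close> k(1) _ at_crossing before] at_crossing[OF k(1)] k(3) by simp
qed

lemma inner_sum_rotated_diff_le:
  fixes x :: complex and y c :: "'j \<Rightarrow> complex"
  assumes "\<And>j. j \<in> J \<Longrightarrow> cmod (c j) = 1" and "\<And>j. j \<in> J \<Longrightarrow> cmod (y j) \<le> b j"
  shows "inner x (\<Sum>j\<in>J. c j * y j - x) \<le> cmod x * sum b J - real (card J) * (cmod x)\<^sup>2"
proof -
  have "inner x (c j * y j) \<le> cmod x * b j" if "j \<in> J" for j
  proof -
    have "inner x (c j * y j) \<le> cmod x * cmod (c j * y j)"
      by (rule norm_cauchy_schwarz)
    also have "\<dots> \<le> cmod x * b j"
      using assms that by (simp add: norm_mult mult_left_mono)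
    finally show ?thesis .
  qed
  then have "(\<Sum>j\<in>J. inner x (c j * y j)) \<le> cmod x * sum b J"
    by (simp add: sum_distrib_left sum_mono)
  moreover have "(\<Sum>j\<in>J. x) = real (card J) *\<^sub>R x"
    by (simp add: scaleR_conv_of_real)
  then have "inner x (\<Sum>j\<in>J. c j * y j - x)
      = (\<Sum>j\<in>J. inner x (c j * y j)) - real (card J) * (cmod x)\<^sup>2"
    by (simp add: inner_sum_right inner_diff_right sum_subtractf power2_norm_eq_inner)
  ultimately show ?thesis by linarith
qed

lemma finite_uniform_margin:
  fixes x y w :: "'i \<Rightarrow> real"
  assumes "finite K" and "\<And>k. k \<in> K \<Longrightarrow> 0 < w k" and "\<And>k. k \<in> K \<Longrightarrow> x k < y k"
  obtains \<delta> where "0 < \<delta>" and "\<And>k. k \<in> K \<Longrightarrow> x k + \<delta> * w k < y k"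
proof -
  define m where "m = Min (insert 1 ((\<lambda>k. (y k - x k) / w k) ` K))"
  have "m \<in> insert 1 ((\<lambda>k. (y k - x k) / w k) ` K)"
    unfolding m_def using assms(1) by (intro Min_in) auto
  then have "0 < m"
    using assms(2,3) by auto
  moreover have "x k + m / 2 * w k < y k" if "k \<in> K" for k
  proof -
    have "m \<le> (y k - x k) / w k"
      unfolding m_def using assms(1) that by simp
    then have "m * w k \<le> y k - x k"
      using assms(2)[OF that] by (simp add: pos_le_divide_eq)
    moreover have "0 < m * w k"
      using \<open>0 < m\<close> assms(2)[OF that] by simp
    ultimately show ?thesis
      by simp
  qed
  ultimately show ?thesis
    using that[of "m / 2"] by simp
qed

lemma inner_consensus_flow_less:
  fixes x :: complex and y c :: "'j \<Rightarrow> complex"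
  assumes "\<And>j. j \<in> J \<Longrightarrow> cmod (c j) = 1" and "\<And>j. j \<in> J \<Longrightarrow> cmod (y j) \<le> w j * r"
    and "cmod x = a * r" and "0 < a" and "0 < r"
    and "(\<Sum>j\<in>J. w j) + \<delta> * a < real (card J) * a"
  shows "inner x (\<Sum>j\<in>J. c j * y j - x) < - \<delta> * (a * r)\<^sup>2"
proof -
  have "inner x (\<Sum>j\<in>J. c j * y j - x) \<le> a * r * (\<Sum>j\<in>J. w j * r) - real (card J) * (a * r)\<^sup>2"
    using inner_sum_rotated_diff_le[where b = "\<lambda>j. w j * r" and x = x, OF assms(1,2)] assms(3) by simp
  also have "\<dots> = a * r * r * ((\<Sum>j\<in>J. w j) - real (card J) * a)"
    unfolding sum_distrib_right[symmetric] by (simp add: power2_eq_square algebra_simps)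
  also have "\<dots> < a * r * r * (- \<delta> * a)"
    using assms(4-6) by (intro mult_strict_left_mono) auto
  also have "\<dots> = - \<delta> * (a * r)\<^sup>2"
    by (simp add: power2_eq_square)
  finally show ?thesis .
qed

lemma has_real_derivative_norm_exp_gap:
  fixes f :: "real \<Rightarrow> 'a::real_inner"
  assumes "(f has_vector_derivative D) (at s within S)"
  shows "((\<lambda>t. (norm (f t))\<^sup>2 - (a * exp (- \<delta> * (t - t0)))\<^sup>2) has_real_derivative
      2 * inner (f s) D + 2 * \<delta> * (a * exp (- \<delta> * (s - t0)))\<^sup>2) (at s within S)"
proof -
  have "((\<lambda>t. (a * exp (- \<delta> * (t - t0)))\<^sup>2) has_real_derivative
      - (2 * \<delta> * (a * exp (- \<delta> * (s - t0)))\<^sup>2)) (at s within S)"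
    by (auto intro!: derivative_eq_intros simp: power2_eq_square)
  from DERIV_diff[OF has_real_derivative_norm_power2[OF assms] this]
  show ?thesis
    by (simp only: diff_minus_eq_add)
qed

lemma weighted_exponential_barrier:
  fixes c :: "'i \<Rightarrow> 'i \<Rightarrow> complex" and e :: "real \<Rightarrow> 'i \<Rightarrow> complex" and w :: "'i \<Rightarrow> real"
  assumes fin: "finite K" and Nb_sub: "\<And>k. k \<in> K \<Longrightarrow> Nb k \<subseteq> insert l K"
    and anchor: "\<And>t. t0 \<le> t \<Longrightarrow> e t l = 0"
    and ode: "\<And>k t. k \<in> K \<Longrightarrow> t0 \<le> t \<Longrightarrow>
       ((\<lambda>s. e s k) has_vector_derivative (\<Sum>j\<in>Nb k. c j k * e t j - e t k)) (at t within {t0..})"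
    and unimodular: "\<And>j k. k \<in> K \<Longrightarrow> j \<in> Nb k \<Longrightarrow> cmod (c j k) = 1"
    and w_l: "0 \<le> w l" and w_pos: "\<And>k. k \<in> K \<Longrightarrow> 0 < w k"
    and rate: "\<And>k. k \<in> K \<Longrightarrow> (\<Sum>j\<in>Nb k. w j) + \<delta> * w k < real (card (Nb k)) * w k"
    and "0 < R" and init: "\<And>k. k \<in> K \<Longrightarrow> cmod (e t0 k) < w k * R"
    and "t0 \<le> t" and "k \<in> K"
  shows "cmod (e t k) < w k * (R * exp (- \<delta> * (t - t0)))"
proof -
  define \<phi> where "\<phi> t = R * exp (- \<delta> * (t - t0))" for t
  have \<phi>_pos: "0 < \<phi> t" for t
    using \<open>0 < R\<close> by (simp add: \<phi>_def)
  define g where "g k t = cmod (e t k) - w k * \<phi> t" for k t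
  have g_cont: "continuous_on {t0..} (g k)" if "k \<in> K" for k
  proof -
    have "continuous_on {t0..} (\<lambda>t. e t k)"
      using ode[OF that] has_vector_derivative_continuous continuous_on_eq_continuous_within by blast
    then show ?thesis unfolding g_def \<phi>_def by (intro continuous_intros)
  qed
  have g_init: "g k t0 < 0" if "k \<in> K" for k
    using init[OF that] by (simp add: g_def \<phi>_def)
  have "g k t < 0"
  proof (rule ccontr)
    assume "\<not> g k t < 0"
    obtain s i where "t0 < s" "i \<in> K" "g i s = 0"
      and at_s: "\<And>j. j \<in> K \<Longrightarrow> g j s \<le> 0"
      and before: "\<And>j \<tau>. j \<in> K \<Longrightarrow> t0 \<le> \<tau> \<Longrightarrow> \<tau> < s \<Longrightarrow> g j \<tau> < 0"
      by (rule first_crossing_time[where g = g, OF fin g_cont g_init \<open>t0 \<le> t\<close> \<open>k \<in> K\<close>])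
        (use \<open>\<not> g k t < 0\<close> in auto)
    define D where "D = (\<Sum>j\<in>Nb i. c j i * e s j - e s i)"
    define a where "a = w i * \<phi> s"
    (* g locates the crossing, but cmod is not differentiable at 0; its square is. *)
    define h where "h t = (cmod (e t i))\<^sup>2 - (w i * \<phi> t)\<^sup>2" for t
    have "(h has_real_derivative 2 * inner (e s i) D + 2 * \<delta> * a\<^sup>2) (at s within {t0..})"
      using has_real_derivative_norm_exp_gap[OF ode[OF \<open>i \<in> K\<close> less_imp_le[OF \<open>t0 < s\<close>]], of "w i * R"]
      unfolding h_def \<phi>_def a_def D_def by (simp add: mult.assoc)
    moreover have "h \<tau> \<le> h s" if "t0 \<le> \<tau>" "\<tau> < s" for \<tau>
      using before[OF \<open>i \<in> K\<close> that] \<open>g i s = 0\<close> by (simp add: g_def h_def power_mono)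
    ultimately have "0 \<le> 2 * inner (e s i) D + 2 * \<delta> * a\<^sup>2"
      by (rule has_real_derivative_nonneg_at_left_max[OF _ \<open>t0 < s\<close>])
    moreover have "inner (e s i) D < - \<delta> * a\<^sup>2"
      unfolding D_def a_def
    proof (rule inner_consensus_flow_less)
      show "cmod (e s j) \<le> w j * \<phi> s" if "j \<in> Nb i" for j
        using at_s[of j] Nb_sub[OF \<open>i \<in> K\<close>] that anchor \<open>t0 < s\<close> w_l \<phi>_pos[of s]
        by (cases "j = l") (auto simp: g_def)
    qed (use unimodular rate w_pos \<phi>_pos \<open>i \<in> K\<close> \<open>g i s = 0\<close> in \<open>simp_all add: g_def\<close>)
    ultimately show False by linarith
  qed
  then show ?thesis
    by (simp add: g_def \<phi>_def)
qed

lemma anchored_consensus_exponential_decay: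
  fixes c :: "'i \<Rightarrow> 'i \<Rightarrow> complex" and e :: "real \<Rightarrow> 'i \<Rightarrow> complex" and w :: "'i \<Rightarrow> real"
  assumes fin: "finite K" and Nb_sub: "\<And>k. k \<in> K \<Longrightarrow> Nb k \<subseteq> insert l K"
    and anchor: "\<And>t. t0 \<le> t \<Longrightarrow> e t l = 0"
    and ode: "\<And>k t. k \<in> K \<Longrightarrow> t0 \<le> t \<Longrightarrow>
       ((\<lambda>s. e s k) has_vector_derivative (\<Sum>j\<in>Nb k. c j k * e t j - e t k)) (at t within {t0..})"
    and unimodular: "\<And>j k. k \<in> K \<Longrightarrow> j \<in> Nb k \<Longrightarrow> cmod (c j k) = 1"
    and w_l: "0 \<le> w l" and w_pos: "\<And>k. k \<in> K \<Longrightarrow> 0 < w k"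
    and dominant: "\<And>k. k \<in> K \<Longrightarrow> (\<Sum>j\<in>Nb k. w j) < real (card (Nb k)) * w k"
  shows "\<exists>C \<delta>. 0 < \<delta> \<and> (\<forall>t\<ge>t0. \<forall>k\<in>insert l K. cmod (e t k) \<le> C * exp (- \<delta> * (t - t0)))"
proof -
  obtain \<delta> where "0 < \<delta>" and rate: "\<And>k. k \<in> K \<Longrightarrow> (\<Sum>j\<in>Nb k. w j) + \<delta> * w k < real (card (Nb k)) * w k"
    using finite_uniform_margin[where w = w and x = "\<lambda>k. \<Sum>j\<in>Nb k. w j" and y = "\<lambda>k. real (card (Nb k)) * w k",
        OF fin w_pos dominant] by blast
  define R where "R = 1 + (\<Sum>k\<in>K. cmod (e t0 k) / w k)"
  have "0 < R"
    unfolding R_def by (intro add_pos_nonneg sum_nonneg divide_nonneg_pos) (auto intro: w_pos)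
  have init: "cmod (e t0 k) < w k * R" if "k \<in> K" for k
  proof -
    have "cmod (e t0 k) / w k \<le> (\<Sum>k\<in>K. cmod (e t0 k) / w k)"
      using fin that w_pos by (intro member_le_sum) (auto intro!: divide_nonneg_pos)
    then show ?thesis
      using w_pos[OF that] by (simp add: R_def divide_le_eq distrib_left mult.commute)
  qed
  define C where "C = R * (\<Sum>k\<in>K. w k)"
  have "cmod (e t k) \<le> C * exp (- \<delta> * (t - t0))" if "t0 \<le> t" "k \<in> insert l K" for t k
  proof (cases "k = l")
    case True
    have "0 \<le> C" unfolding C_def using \<open>0 < R\<close> w_pos by (simp add: sum_nonneg less_imp_le)
    then show ?thesis using True anchor[OF \<open>t0 \<le> t\<close>] by simp
  next
    case False
    then have "k \<in> K" using that by simp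
    have "cmod (e t k) < w k * (R * exp (- \<delta> * (t - t0)))"
      by (rule weighted_exponential_barrier[where Nb = Nb and c = c, OF fin Nb_sub anchor ode unimodular
            w_l w_pos rate \<open>0 < R\<close> init \<open>t0 \<le> t\<close> \<open>k \<in> K\<close>])
    also have "\<dots> \<le> C * exp (- \<delta> * (t - t0))"
    proof -
      have "w k \<le> (\<Sum>k\<in>K. w k)"
        using fin \<open>k \<in> K\<close> w_pos by (intro member_le_sum) (auto intro: less_imp_le)
      then show ?thesis
        using \<open>0 < R\<close> unfolding C_def by (simp add: mult_right_mono)
    qed
    finally show ?thesis by simp
  qed
  then show ?thesis using \<open>0 < \<delta>\<close> by blast
qed

definition hop_dist :: "('a \<times> 'a) set \<Rightarrow> 'a \<Rightarrow> 'a \<Rightarrow> nat" where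
  "hop_dist R k l = (LEAST d. (k, l) \<in> R ^^ d)"

lemma hop_dist_self: "hop_dist R l l = 0"
  unfolding hop_dist_def by (rule Least_eq_0) simp

lemma hop_dist_step:
  assumes "(k, l) \<in> R\<^sup>*" and "k \<noteq> l"
  obtains j where "(k, j) \<in> R" and "Suc (hop_dist R j l) \<le> hop_dist R k l"
proof -
  obtain n where "(k, l) \<in> R ^^ n"
    using assms(1) rtrancl_power by blast
  then have path: "(k, l) \<in> R ^^ hop_dist R k l"
    unfolding hop_dist_def by (rule LeastI)
  then obtain d where d: "hop_dist R k l = Suc d"
    using assms(2) by (cases "hop_dist R k l") auto
  then obtain j where "(k, j) \<in> R" and "(j, l) \<in> R ^^ d"
    using path relpow_Suc_D2 by fastforce
  moreover have "hop_dist R j l \<le> d"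
    unfolding hop_dist_def using \<open>(j, l) \<in> R ^^ d\<close> by (rule Least_le)
  ultimately show ?thesis
    using that d by simp
qed

lemma sum_geometric_weights_less:
  fixes h :: "'j \<Rightarrow> nat" and \<epsilon> :: real
  assumes "finite J" and "j0 \<in> J" and closer: "Suc (h j0) \<le> n"
    and "0 < \<epsilon>" and "\<epsilon> < 1" and small: "real (card J) * \<epsilon> < 1"
  shows "(\<Sum>j\<in>J. 1 - \<epsilon> ^ h j) < real (card J) * (1 - \<epsilon> ^ n)"
proof -
  have "0 < card J"
    using assms(1,2) card_gt_0_iff by blast
  then have "(\<Sum>j\<in>J - {j0}. 1 - \<epsilon> ^ h j) \<le> real (card J) - 1"
    using sum_bounded_above[of "J - {j0}" "\<lambda>j. 1 - \<epsilon> ^ h j" 1] \<open>0 < \<epsilon>\<close>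
    by (simp add: card_Diff_singleton[OF assms(2)] of_nat_diff)
  then have "(\<Sum>j\<in>J. 1 - \<epsilon> ^ h j) \<le> real (card J) - \<epsilon> ^ h j0"
    using assms(1) by (simp add: sum.remove[OF _ assms(2)])
  also have "\<dots> < real (card J) * (1 - \<epsilon> ^ n)"
  proof -
    have "\<epsilon> ^ n \<le> \<epsilon> * \<epsilon> ^ h j0"
      using power_decreasing[OF closer, of \<epsilon>] \<open>0 < \<epsilon>\<close> \<open>\<epsilon> < 1\<close> by simp
    then have "real (card J) * \<epsilon> ^ n \<le> real (card J) * (\<epsilon> * \<epsilon> ^ h j0)"
      by (rule mult_left_mono) simp
    moreover have "real (card J) * \<epsilon> * \<epsilon> ^ h j0 < \<epsilon> ^ h j0"
      using small \<open>0 < \<epsilon>\<close> by simp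
    ultimately show ?thesis
      unfolding right_diff_distrib mult.assoc by simp
  qed
  finally show ?thesis .
qed

lemma dominant_weights_of_reachability:
  fixes Nb :: "'i \<Rightarrow> 'i set"
  assumes fin: "finite A" and Nb_fin: "\<And>k. k \<in> A \<Longrightarrow> finite (Nb k)"
    and reach: "\<And>k. k \<in> A \<Longrightarrow> (k, l) \<in> {(x, y). x \<in> A \<and> y \<in> Nb x}\<^sup>*"
  obtains w :: "'i \<Rightarrow> real" where "w l = 0"
    and "\<And>k. k \<in> A - {l} \<Longrightarrow> 0 < w k"
    and "\<And>k. k \<in> A - {l} \<Longrightarrow> (\<Sum>j\<in>Nb k. w j) < real (card (Nb k)) * w k"
proof -
  define hop where "hop k = hop_dist {(x, y). x \<in> A \<and> y \<in> Nb x} k l" for k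
  define \<epsilon> :: real where "\<epsilon> = 1 / (2 + (\<Sum>k\<in>A. real (card (Nb k))))"
  have "0 < \<epsilon>" "\<epsilon> < 1"
    by (simp_all add: \<epsilon>_def sum_nonneg add_pos_nonneg)
  have small: "real (card (Nb k)) * \<epsilon> < 1" if "k \<in> A" for k
  proof -
    have "real (card (Nb k)) \<le> (\<Sum>k\<in>A. real (card (Nb k)))"
      using fin that by (intro member_le_sum) auto
    then show ?thesis
      by (simp add: \<epsilon>_def field_simps sum_nonneg add_pos_nonneg)
  qed
  define w where "w k = 1 - \<epsilon> ^ hop k" for k
  have "w l = 0"
    by (simp add: w_def hop_def hop_dist_self)
  moreover have "0 < w k \<and> (\<Sum>j\<in>Nb k. w j) < real (card (Nb k)) * w k" if k: "k \<in> A - {l}" for k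
  proof -
    obtain j0 where "j0 \<in> Nb k" and closer: "Suc (hop j0) \<le> hop k"
      using hop_dist_step[OF reach] k unfolding hop_def by blast
    have "\<epsilon> ^ hop k < 1"
      using power_decreasing[of 1 "hop k" \<epsilon>] closer \<open>0 < \<epsilon>\<close> \<open>\<epsilon> < 1\<close> by simp
    moreover have "(\<Sum>j\<in>Nb k. w j) < real (card (Nb k)) * w k"
      unfolding w_def using Nb_fin \<open>j0 \<in> Nb k\<close> closer \<open>0 < \<epsilon>\<close> \<open>\<epsilon> < 1\<close> small k
      by (intro sum_geometric_weights_less) auto
    ultimately show ?thesis
      by (simp add: w_def)
  qed
  ultimately show ?thesis
    using that by blast
qed

lemma anchored_consensus_exponential_decay_of_reachability:
  fixes c :: "'i \<Rightarrow> 'i \<Rightarrow> complex" and e :: "real \<Rightarrow> 'i \<Rightarrow> complex"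
  assumes fin: "finite A" and "l \<in> A" and Nb_sub: "\<And>k. k \<in> A \<Longrightarrow> Nb k \<subseteq> A"
    and reach: "\<And>k. k \<in> A \<Longrightarrow> (k, l) \<in> {(x, y). x \<in> A \<and> y \<in> Nb x}\<^sup>*"
    and anchor: "\<And>t. t0 \<le> t \<Longrightarrow> e t l = 0"
    and ode: "\<And>k t. k \<in> A - {l} \<Longrightarrow> t0 \<le> t \<Longrightarrow>
       ((\<lambda>s. e s k) has_vector_derivative (\<Sum>j\<in>Nb k. c j k * e t j - e t k)) (at t within {t0..})"
    and unimodular: "\<And>j k. k \<in> A - {l} \<Longrightarrow> j \<in> Nb k \<Longrightarrow> cmod (c j k) = 1"
  shows "\<exists>C \<delta>. 0 < \<delta> \<and> (\<forall>t\<ge>t0. \<forall>k\<in>A. cmod (e t k) \<le> C * exp (- \<delta> * (t - t0)))"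
proof -
  obtain w :: "'i \<Rightarrow> real" where "w l = 0" and "\<And>k. k \<in> A - {l} \<Longrightarrow> 0 < w k"
    and "\<And>k. k \<in> A - {l} \<Longrightarrow> (\<Sum>j\<in>Nb k. w j) < real (card (Nb k)) * w k"
    by (rule dominant_weights_of_reachability[OF fin _ reach]) (use fin Nb_sub finite_subset in blast)+
  then have "\<exists>C \<delta>. 0 < \<delta> \<and> (\<forall>t\<ge>t0. \<forall>k\<in>insert l (A - {l}). cmod (e t k) \<le> C * exp (- \<delta> * (t - t0)))"
    using fin Nb_sub anchor ode unimodular
    by (intro anchored_consensus_exponential_decay[where Nb = Nb and c = c and w = w]) auto
  then show ?thesis
    using \<open>l \<in> A\<close> by (simp add: insert_absorb)
qed

lemma has_vector_derivative_consensus_error: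
  fixes x :: "real \<Rightarrow> 'j \<Rightarrow> complex"
  assumes "((\<lambda>s. x s k) has_vector_derivative (\<Sum>j\<in>J. c j * x t j - x t k)) F"
    and "\<And>j. j \<in> J \<Longrightarrow> c j * z j = z k"
  shows "((\<lambda>s. x s k - z k) has_vector_derivative (\<Sum>j\<in>J. c j * (x t j - z j) - (x t k - z k))) F"
proof -
  have "(\<Sum>j\<in>J. c j * x t j - x t k) = (\<Sum>j\<in>J. c j * (x t j - z j) - (x t k - z k))"
    using assms(2) by (intro sum.cong) (auto simp: right_diff_distrib)
  then show ?thesis
    using has_vector_derivative_diff[OF assms(1) has_vector_derivative_const[of "z k"]] by simp
qed

lemma cis_PV [simp]: "cis (PV x) = cis x"
proof -
  have "cis (2 * pi * of_int \<lfloor>(x + pi) / (2 * pi)\<rfloor>) = 1"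
    by (rule cis_multiple_2pi) simp
  then show ?thesis
    by (simp add: PV_def cis_divide[symmetric])
qed

lemma bearing_eq_sgn: "bearing p v u = sgn (p v - p u)"
  by (simp add: bearing_def sgn_div_norm divide_inverse scaleR_conv_of_real mult.commute)

lemma cis_ang_bearing: "p v \<noteq> p u \<Longrightarrow> cis (ang (bearing p v u)) = sgn (p v - p u)"
  by (simp add: ang_def bearing_eq_sgn cis_Arg sgn_zero_iff)

lemma zval_rotation:
  assumes head_tail: "fst (lab j) = snd (lab k)"
    and distinct: "p (rho (fst (lab k))) \<noteq> p (rho (snd (lab k)))"
      "p (rho (fst (lab j))) \<noteq> p (rho (snd (lab j)))"
  shows "exp (- \<i> * of_real (theta_rel p lab j k)) * zval p lab j = zval p lab k"
proof -
  define u v w where "u = rho (fst (lab k))" and "v = rho (snd (lab k))" and "w = rho (snd (lab j))"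
  have "p u \<noteq> p v" "p w \<noteq> p v"
    using distinct head_tail by (auto simp: u_def v_def w_def)
  have z_k: "zval p lab k = sgn (p v - p u)" and z_j: "zval p lab j = sgn (p w - p v)"
    using \<open>p u \<noteq> p v\<close> \<open>p w \<noteq> p v\<close> head_tail
    by (simp_all add: zval_def theta_edge_def u_def v_def w_def cis_conv_exp[symmetric]
        mult.commute cis_ang_bearing)
  have exp_cis: "exp (- \<i> * of_real \<theta>) = inverse (cis \<theta>)" for \<theta>
    by (simp add: cis_conv_exp exp_minus)
  have "exp (- \<i> * of_real (theta_rel p lab j k)) = - sgn (p u - p v) / sgn (p w - p v)"
  proof (cases "w = u")
    case True
    then show ?thesis
      using \<open>p u \<noteq> p v\<close> by (simp add: theta_rel_def u_def v_def w_def Let_def sgn_zero_iff)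
  next
    case False
    have "cis (alpha p v w u) = sgn (p w - p v) / sgn (p u - p v)"
      using \<open>p u \<noteq> p v\<close> \<open>p w \<noteq> p v\<close>
      by (simp add: alpha_def cis_divide[symmetric] cis_ang_bearing)
    moreover have "cis (alpha p v w u + pi) = - cis (alpha p v w u)"
      by (simp add: cis_mult[symmetric])
    moreover have "theta_rel p lab j k = PV (alpha p v w u + pi)"
      using False by (simp add: theta_rel_def u_def v_def w_def Let_def)
    then have "exp (- \<i> * of_real (theta_rel p lab j k)) = inverse (cis (alpha p v w u + pi))"
      by (simp only: exp_cis cis_PV)
    ultimately show ?thesis by simp
  qed
  moreover have "sgn (p v - p u) = - sgn (p u - p v)"
    by (metis minus_diff_eq sgn_minus)
  ultimately show ?thesis
    using \<open>p w \<noteq> p v\<close> z_j z_k by (simp add: sgn_zero_iff)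
qed

lemma comm_edge_agents:
  assumes "\<forall>(u, w, v) \<in> S. u \<in> {1..N} \<and> v \<in> {1..N} \<and> w \<in> {1..N} \<and> u \<noteq> v \<and> u \<noteq> w \<and> v \<noteq> w"
    and "(u, v) \<in> comm_edges S"
  shows "u \<in> {1..N}" and "v \<in> {1..N}" and "u \<noteq> v"
  using assms unfolding comm_edges_def by fastforce+

lemma elg_edge_positions_distinct:
  assumes "inj_on p {1..N}"
    and "\<forall>(u, w, v) \<in> S. u \<in> {1..N} \<and> v \<in> {1..N} \<and> w \<in> {1..N} \<and> u \<noteq> v \<and> u \<noteq> w \<and> v \<noteq> w"
    and "e \<in> elg_edges S"
  shows "p (rho (fst e)) \<noteq> p (rho (snd e))"
proof -
  obtain u v where "rho (fst e) = u" "rho (snd e) = v" "(u, v) \<in> comm_edges S \<or> (v, u) \<in> comm_edges S"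
    using assms(3) unfolding elg_edges_def rho_def by auto
  then show ?thesis
    using comm_edge_agents[OF assms(2)] inj_onD[OF assms(1)] by metis
qed

lemma elg_edge_head_in_vertices:
  assumes S_sym: "\<And>u w v. (u, w, v) \<in> S \<longleftrightarrow> (u, v, w) \<in> S" and "e \<in> elg_edges S"
  shows "snd e \<in> elg_vertices S"
proof -
  consider (real) u v where "e = ((u, None), (v, None))" "measures S v u"
    | (to_virtual) u v where "e = ((u, None), (v, Some u))" "(u, v) \<in> comm_edges S" "\<not> measures S v u"
    | (from_virtual) u v where "e = ((v, Some u), (u, None))" "(u, v) \<in> comm_edges S" "\<not> measures S v u"
    using assms(2) unfolding elg_edges_def by blast
  then show ?thesis
  proof cases
    case (from_virtual u v)
    obtain x y z where "(x, y, z) \<in> S" "(u, v) \<in> {(x, z), (z, x), (x, y), (y, x)}"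
      using from_virtual(2) unfolding comm_edges_def by blast
    then have "\<exists>y z. (u, y, z) \<in> S"
      using from_virtual(3) S_sym unfolding measures_def by blast
    then show ?thesis
      using from_virtual(1) unfolding elg_vertices_def by auto
  qed (auto simp: elg_vertices_def measures_def)
qed

definition li_edges :: "(nat \<Rightarrow> vtx \<times> vtx) \<Rightarrow> nat \<Rightarrow> (nat \<times> nat) set" where
  "li_edges lab M = {(k, j). k \<in> {1..M} \<and> j \<in> li_nbrs lab M k}"

lemma li_edges_path_of_path:
  assumes lab: "bij_betw lab {1..M} E" and "l \<in> {1..M}" and "(b, fst (lab l)) \<in> E\<^sup>*"
  shows "k \<in> {1..M} \<Longrightarrow> snd (lab k) = b \<Longrightarrow> (k, l) \<in> (li_edges lab M)\<^sup>*"
  using assms(3)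
proof (induction arbitrary: k rule: converse_rtrancl_induct)
  case base
  then have "(k, l) \<in> li_edges lab M"
    using \<open>l \<in> {1..M}\<close> by (simp add: li_edges_def li_nbrs_def)
  then show ?case by blast
next
  case (step x y)
  obtain j where j: "j \<in> {1..M}" "lab j = (x, y)"
    using lab step(1) by (metis bij_betw_imp_surj_on imageE)
  then have "(k, j) \<in> li_edges lab M"
    using step by (simp add: li_edges_def li_nbrs_def)
  moreover have "(j, l) \<in> (li_edges lab M)\<^sup>*"
    using step.IH[OF j(1)] j(2) by simp
  ultimately show ?case by (rule converse_rtrancl_into_rtrancl)
qed

lemma li_edges_reach_root_edge:
  assumes S_sym: "\<And>u w v. (u, w, v) \<in> S \<longleftrightarrow> (u, v, w) \<in> S"
    and lab: "bij_betw lab {1..M} (elg_edges S)"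
    and tree: "has_oriented_spanning_tree (elg_vertices S) (elg_edges S) r"
    and "l \<in> {1..M}" "fst (lab l) = r" and k: "k \<in> {1..M}"
  shows "(k, l) \<in> (li_edges lab M)\<^sup>*"
proof -
  obtain T where "T \<subseteq> elg_edges S" and to_root: "\<forall>v\<in>elg_vertices S. v \<noteq> r \<longrightarrow> (v, r) \<in> T\<^sup>+"
    using tree unfolding has_oriented_spanning_tree_def by blast
  have "snd (lab k) \<in> elg_vertices S"
    using elg_edge_head_in_vertices[OF S_sym] bij_betwE[OF lab] k by blast
  then have "(snd (lab k), r) \<in> (elg_edges S)\<^sup>*"
  proof (cases "snd (lab k) = r")
    case False
    then have "(snd (lab k), r) \<in> T\<^sup>+"
      using to_root \<open>snd (lab k) \<in> elg_vertices S\<close> by blast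
    then have "(snd (lab k), r) \<in> (elg_edges S)\<^sup>+"
      using \<open>T \<subseteq> elg_edges S\<close> by (rule trancl_mono)
    then show ?thesis
      by (rule trancl_into_rtrancl)
  qed simp
  then show ?thesis
    using li_edges_path_of_path[OF lab \<open>l \<in> {1..M}\<close>] k \<open>fst (lab l) = r\<close> by simp
qed

lemma li_nbr_zval_rotation:
  assumes "inj_on p {1..N}"
    and "\<forall>(u, w, v) \<in> S. u \<in> {1..N} \<and> v \<in> {1..N} \<and> w \<in> {1..N} \<and> u \<noteq> v \<and> u \<noteq> w \<and> v \<noteq> w"
    and "bij_betw lab {1..M} (elg_edges S)" and "k \<in> {1..M}" and "j \<in> li_nbrs lab M k"
  shows "exp (- \<i> * of_real (theta_rel p lab j k)) * zval p lab j = zval p lab k"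
proof -
  have "lab k \<in> elg_edges S" "lab j \<in> elg_edges S" and head_tail: "fst (lab j) = snd (lab k)"
    using assms(3-5) by (auto simp: li_nbrs_def bij_betw_def)
  then have "p (rho (fst (lab k))) \<noteq> p (rho (snd (lab k)))" "p (rho (fst (lab j))) \<noteq> p (rho (snd (lab j)))"
    using elg_edge_positions_distinct[OF assms(1,2)] by blast+
  then show ?thesis
    by (rule zval_rotation[OF head_tail])
qed

lemma zval_error_dynamics:
  assumes "inj_on p {1..N}"
    and "\<forall>(u, w, v) \<in> S. u \<in> {1..N} \<and> v \<in> {1..N} \<and> w \<in> {1..N} \<and> u \<noteq> v \<and> u \<noteq> w \<and> v \<noteq> w"
    and "bij_betw lab {1..M} (elg_edges S)" and "k \<in> {1..M}"
    and "((\<lambda>s. zhat s k) has_vector_derivative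
      (\<Sum>j\<in>li_nbrs lab M k. exp (- \<i> * of_real (theta_rel p lab j k)) * zhat t j - zhat t k)) F"
  shows "((\<lambda>s. zhat s k - zval p lab k) has_vector_derivative
      (\<Sum>j\<in>li_nbrs lab M k. exp (- \<i> * of_real (theta_rel p lab j k)) * (zhat t j - zval p lab j)
        - (zhat t k - zval p lab k))) F"
  using assms(5) li_nbr_zval_rotation[OF assms(1-4)] by (rule has_vector_derivative_consensus_error)

lemma sqrt_sum_power2_norm_le:
  assumes "\<And>k. k \<in> A \<Longrightarrow> norm (f k) \<le> b"
  shows "sqrt (\<Sum>k\<in>A. (norm (f k))\<^sup>2) \<le> real (card A) * b"
proof -
  have "sqrt (\<Sum>k\<in>A. (norm (f k))\<^sup>2) \<le> (\<Sum>k\<in>A. norm (f k))"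
    using L2_set_le_sum[of A "\<lambda>k. norm (f k)"] by (simp add: L2_set_def)
  also have "\<dots> \<le> real (card A) * b"
    using sum_bounded_above[of A "\<lambda>k. norm (f k)"] assms by simp
  finally show ?thesis .
qed

theorem theorem4:
  fixes N M :: nat and p :: "nat \<Rightarrow> complex" and S :: "(nat \<times> nat \<times> nat) set"
    and lab :: "nat \<Rightarrow> vtx \<times> vtx" and r v1 :: vtx and l :: nat
    and zhat :: "real \<Rightarrow> nat \<Rightarrow> complex" and t0 :: real
  assumes pos_distinct: "inj_on p {1..N}"
    and S_agents: "\<forall>(u, w, v) \<in> S. u \<in> {1..N} \<and> v \<in> {1..N} \<and> w \<in> {1..N}
                     \<and> u \<noteq> v \<and> u \<noteq> w \<and> v \<noteq> w"
    and S_sym: "\<And>u w v. (u, w, v) \<in> S \<longleftrightarrow> (u, v, w) \<in> S"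
    and S_related: "\<And>u v w. v \<in> {x. \<exists>y. (u, y, x) \<in> S} \<Longrightarrow> w \<in> {x. \<exists>y. (u, y, x) \<in> S}
                      \<Longrightarrow> (v, w) \<in> {(x, y). (u, y, x) \<in> S}\<^sup>*"
    and G_connected: "\<forall>u\<in>{1..N}. \<forall>v\<in>{1..N}. (u, v) \<in> (comm_edges S)\<^sup>*"
    and M_def: "M = card (elg_edges S)"
    and lab_bij: "bij_betw lab {1..M} (elg_edges S)"
    and tree: "has_oriented_spanning_tree (elg_vertices S) (elg_edges S) r"
    and v1_nbr: "(r, v1) \<in> elg_edges S"
    and l_def: "l \<in> {1..M}" "lab l = (r, v1)"
    and fixed_l: "\<forall>t\<ge>t0. zhat t l = zval p lab l"
    and dyn: "\<And>k t. k \<in> {1..M} \<Longrightarrow> k \<noteq> l \<Longrightarrow> t \<ge> t0 \<Longrightarrow>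
       ((\<lambda>s. zhat s k) has_vector_derivative
          (\<Sum>j\<in>li_nbrs lab M k. exp (- \<i> * of_real (theta_rel p lab j k)) * zhat t j - zhat t k))
        (at t within {t0..})"
  shows "\<exists>C rate::real. rate > 0 \<and> (\<forall>t\<ge>t0.
           sqrt (\<Sum>k\<in>{1..M}. (cmod (zhat t k - zval p lab k))\<^sup>2) \<le> C * exp (- rate * (t - t0)))"
proof -
  have "\<exists>C \<delta>. 0 < \<delta> \<and> (\<forall>t\<ge>t0. \<forall>k\<in>{1..M}. cmod (zhat t k - zval p lab k) \<le> C * exp (- \<delta> * (t - t0)))"
  proof (rule anchored_consensus_exponential_decay_of_reachability
      [where c = "\<lambda>j k. exp (- \<i> * of_real (theta_rel p lab j k))" and Nb = "li_nbrs lab M"])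
    show "(k, l) \<in> {(x, y). x \<in> {1..M} \<and> y \<in> li_nbrs lab M x}\<^sup>*" if "k \<in> {1..M}" for k
      using li_edges_reach_root_edge[OF S_sym lab_bij tree l_def(1) _ that] l_def(2)
      by (simp add: li_edges_def)
  qed (use l_def(1) dyn zval_error_dynamics[OF pos_distinct S_agents lab_bij] fixed_l
      in \<open>auto simp: li_nbrs_def\<close>)
  then obtain C \<delta> where "0 < \<delta>"
    and decay: "\<And>t k. t0 \<le> t \<Longrightarrow> k \<in> {1..M} \<Longrightarrow> cmod (zhat t k - zval p lab k) \<le> C * exp (- \<delta> * (t - t0))"
    by blast
  have "sqrt (\<Sum>k\<in>{1..M}. (cmod (zhat t k - zval p lab k))\<^sup>2) \<le> (M * C) * exp (- \<delta> * (t - t0))"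
    if "t0 \<le> t" for t
    using sqrt_sum_power2_norm_le[of "{1..M}" "\<lambda>k. zhat t k - zval p lab k"] decay[OF that]
    by (simp add: mult.assoc)
  then show ?thesis
    using \<open>0 < \<delta>\<close> by blast
qed

end
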